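(* Let $c\in\mathbb{R}\setminus\{0\}$, $b>0$, $d\ge1$, $\Delta t,\Delta x>0$, and let $X=(\mathbb{R}/(b/c)\mathbb{Z})\times(\mathbb{R}/b\mathbb{Z})$ be the torus with coordinates $(t,x)$. Let $W=C^1(X,\mathbb{R}^d)$ and $\Sigma=\{u\in W\mid u(t+s,x+cs)=u(t,x)\ \text{for all } s\in\mathbb{R},(t,x)\in X\}$ the travelling waves with wave speed $c$. Let $L_d\colon(\mathbb{R}^d)^3\to\mathbb{R}$ be an (autonomous) discrete Lagrangian density such that $S\colon W\to\mathbb{R}$, $$S(u)=\int_X L_d\big(u(t,x),u(t+\Delta t,x),u(t,x+\Delta x)\big)\,\mathrm{d}x\,\mathrm{d}t,$$ is continuously differentiable, and let $S_\Sigma$ denote the restriction of $S$ to $\Sigma$. Then a travelling wave $u\in\Sigma$ is a stationary point of $S$ if and only if $u$ is a stationary point of $S_\Sigma$.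
   Context: Arguments $t+\Delta t$, $x+\Delta x$ are taken modulo the periods of the torus. A stationary point of $S$ (resp. $S_\Sigma$) is a point where the derivative of $S$ vanishes in all directions of $W$ (resp. all directions in the linear subspace $\Sigma$). *)

theory Defs
  imports "HOL-Analysis.Analysis"
begin

text \<open>Functions on the torus X = (R/(b/c)Z) x (R/bZ) are represented as
  doubly periodic functions on R x R (coordinates (t,x)).\<close>

definition torus_periodic :: "real \<Rightarrow> real \<Rightarrow> (real \<times> real \<Rightarrow> 'a) \<Rightarrow> bool" where
  "torus_periodic b c u \<longleftrightarrow>
     (\<forall>t x. u (t + b / c, x) = u (t, x) \<and> u (t, x + b) = u (t, x))"

definition C1_map :: "(real \<times> real \<Rightarrow> real ^ 'd) \<Rightarrow> bool" where
  "C1_map u \<longleftrightarrow>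
     (\<exists>D. (\<forall>z. (u has_derivative D z) (at z)) \<and>
          continuous_on UNIV (\<lambda>z. D z (1, 0)) \<and>
          continuous_on UNIV (\<lambda>z. D z (0, 1)))"

definition W_space :: "real \<Rightarrow> real \<Rightarrow> (real \<times> real \<Rightarrow> real ^ 'd) set" where
  "W_space b c = {u. torus_periodic b c u \<and> C1_map u}"

definition Sigma_space :: "real \<Rightarrow> real \<Rightarrow> (real \<times> real \<Rightarrow> real ^ 'd) set" where
  "Sigma_space b c = {u \<in> W_space b c. \<forall>s t x. u (t + s, x + c * s) = u (t, x)}"

definition C1_norm :: "(real \<times> real \<Rightarrow> real ^ 'd) \<Rightarrow> real" where
  "C1_norm u = Sup (range (\<lambda>z. norm (u z)))
              + Sup (range (\<lambda>z. norm (frechet_derivative u (at z) (1, 0))))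
              + Sup (range (\<lambda>z. norm (frechet_derivative u (at z) (0, 1))))"

definition discrete_action ::
  "real \<Rightarrow> real \<Rightarrow> real \<Rightarrow> real \<Rightarrow> (real ^ 'd \<Rightarrow> real ^ 'd \<Rightarrow> real ^ 'd \<Rightarrow> real)
     \<Rightarrow> (real \<times> real \<Rightarrow> real ^ 'd) \<Rightarrow> real" where
  "discrete_action b c dt dx L u =
     integral (cbox (0, 0) (\<bar>b / c\<bar>, b))
       (\<lambda>(t, x). L (u (t, x)) (u (t + dt, x)) (u (t, x + dx)))"

definition C1_functional_on ::
  "(real \<times> real \<Rightarrow> real ^ 'd) set \<Rightarrow> ((real \<times> real \<Rightarrow> real ^ 'd) \<Rightarrow> real) \<Rightarrow> bool" where
  "C1_functional_on V S \<longleftrightarrow>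
     (\<exists>DS. (\<forall>u\<in>V.
               (\<forall>h\<in>V. \<forall>k\<in>V. DS u (\<lambda>z. h z + k z) = DS u h + DS u k) \<and>
               (\<forall>h\<in>V. \<forall>r. DS u (\<lambda>z. r *\<^sub>R h z) = r * DS u h) \<and>
               (\<exists>K. \<forall>h\<in>V. \<bar>DS u h\<bar> \<le> K * C1_norm h)) \<and>
            (\<forall>u\<in>V. \<forall>e>0. \<exists>\<delta>>0. \<forall>h\<in>V. C1_norm h < \<delta> \<longrightarrow>
               \<bar>S (\<lambda>z. u z + h z) - S u - DS u h\<bar> \<le> e * C1_norm h) \<and>
            (\<forall>u\<in>V. \<forall>e>0. \<exists>\<delta>>0. \<forall>u'\<in>V. C1_norm (\<lambda>z. u' z - u z) < \<delta> \<longrightarrow>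
               (\<forall>h\<in>V. \<bar>DS u' h - DS u h\<bar> \<le> e * C1_norm h)))"

definition stationary_wrt ::
  "(real \<times> real \<Rightarrow> real ^ 'd) set \<Rightarrow> ((real \<times> real \<Rightarrow> real ^ 'd) \<Rightarrow> real)
     \<Rightarrow> (real \<times> real \<Rightarrow> real ^ 'd) \<Rightarrow> bool" where
  "stationary_wrt V S u \<longleftrightarrow>
     (\<forall>v\<in>V. ((\<lambda>\<epsilon>. S (\<lambda>z. u z + \<epsilon> *\<^sub>R v z)) has_real_derivative 0) (at 0))"

end

theory Submission
  imports Defs
begin

text \<open>Only stationarity on \<open>\<Sigma>\<close> \<open>\<Longrightarrow>\<close> stationarity on \<open>W\<close> needs an argument. Let \<open>T\<close> be the
  derivative of \<open>S\<close> at \<open>u\<close>. The action integrates over a full period of the torus, so it is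
  invariant under translations; as \<open>u\<close> is a travelling wave, \<open>T\<close> is therefore invariant under
  the wave flow \<open>v \<mapsto> v(\<cdot> + s(1, c))\<close>, and \<open>T\<close> vanishes on \<open>\<Sigma>\<close> by hypothesis.
  Replacing \<open>v\<close> by the mean \<open>A\<^sub>N\<close> of its translates by \<open>(k/N) (b/c, b)\<close>, \<open>k < N\<close>, which
  cover one period of the wave flow, does not change \<open>T v\<close>, and by uniform continuity of \<open>v\<close> and its
  derivatives, \<open>A\<^sub>N\<close> is \<open>C\<^sup>1\<close>-close to the travelling wave \<open>(t, x) \<mapsto> A\<^sub>N(0, x - c t)\<close>
  for large \<open>N\<close>. Boundedness of \<open>T\<close> then forces \<open>T v = 0\<close>.\<close>

section \<open>Translating integrals of periodic functions\<close>

lemma periodic_int_multiple: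
  fixes f :: "'a::real_vector \<Rightarrow> 'b"
  assumes "\<And>z. f (z + p) = f z"
  shows "f (z + of_int m *\<^sub>R p) = f z"
proof (induction m arbitrary: z rule: int_induct[where k = 0])
  case base then show ?case by simp
next
  case (step1 i)
  have "z + of_int (i + 1) *\<^sub>R p = (z + of_int i *\<^sub>R p) + p" by (simp add: algebra_simps)
  then show ?case using assms step1 by (metis add.assoc)
next
  case (step2 i)
  have "z + of_int (i - 1) *\<^sub>R p + p = z + of_int i *\<^sub>R p" by (simp add: algebra_simps)
  then show ?case using assms[of "z + of_int (i - 1) *\<^sub>R p"] step2 by metis
qed

lemma cbox_inter_halfspace_le:
  fixes a b :: "'a::euclidean_space"
  assumes "k \<in> Basis" "t \<le> b \<bullet> k"
  shows "cbox a b \<inter> {x. x \<bullet> k \<le> t} = cbox a (b - (b \<bullet> k - t) *\<^sub>R k)"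
  using assms by (fastforce simp: mem_box inner_diff_left inner_Basis split: if_splits)

lemma cbox_inter_halfspace_ge:
  fixes a b :: "'a::euclidean_space"
  assumes "k \<in> Basis" "a \<bullet> k \<le> t"
  shows "cbox a b \<inter> {x. t \<le> x \<bullet> k} = cbox (a + (t - a \<bullet> k) *\<^sub>R k) b"
  using assms by (fastforce simp: mem_box inner_add_left inner_Basis split: if_splits)

lemma has_integral_periodic_shift_Basis:
  fixes G :: "'a::euclidean_space \<Rightarrow> 'b::banach" and a b k :: 'a
  defines "p \<equiv> b \<bullet> k - a \<bullet> k"
  assumes k: "k \<in> Basis" and per: "\<And>z. G (z + p *\<^sub>R k) = G z"
    and r: "0 \<le> r" "r \<le> p" and G: "(G has_integral I) (cbox a b)"
  shows "((\<lambda>z. G (z + r *\<^sub>R k)) has_integral I) (cbox a b)"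
proof -
  \<comment> \<open>Cut the box at \<open>a \<bullet> k + r\<close>; the translated lower slab reappears, one period later,
    as the upper end of the translated box.\<close>
  define m where "m = a \<bullet> k + r"
  have lo: "cbox a b \<inter> {x. x \<bullet> k \<le> m} = cbox a (b - (p - r) *\<^sub>R k)"
    and hi: "cbox a b \<inter> {x. m \<le> x \<bullet> k} = cbox (a + r *\<^sub>R k) b"
    using r by (subst cbox_inter_halfspace_le cbox_inter_halfspace_ge; simp add: k m_def p_def algebra_simps)+
  have intG: "G integrable_on cbox a b" using G by blast
  obtain I1 where I1: "(G has_integral I1) (cbox a (b - (p - r) *\<^sub>R k))"
    using integrable_split(1)[OF intG k, of m] lo by (auto simp: integrable_on_def)
  obtain I2 where I2: "(G has_integral I2) (cbox (a + r *\<^sub>R k) b)"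
    using integrable_split(2)[OF intG k, of m] hi by (auto simp: integrable_on_def)
  have "I = I1 + I2"
    using has_integral_split[OF _ _ k, of G I1 a b m I2] I1 I2 lo hi G has_integral_unique by auto
  have lo': "cbox a b \<inter> {x. x \<bullet> k \<le> b \<bullet> k - r} = cbox a (b - r *\<^sub>R k)"
    and hi': "cbox a b \<inter> {x. b \<bullet> k - r \<le> x \<bullet> k} = cbox (a + (p - r) *\<^sub>R k) b"
    using r by (subst cbox_inter_halfspace_le cbox_inter_halfspace_ge; simp add: k p_def algebra_simps)+
  have "((\<lambda>z. G (z + r *\<^sub>R k)) has_integral I2) (cbox a (b - r *\<^sub>R k))"
    using has_integral_shift_cbox[OF I2, of "r *\<^sub>R k"] by simp
  moreover have "((\<lambda>z. G (z + r *\<^sub>R k)) has_integral I1) (cbox (a + (p - r) *\<^sub>R k) b)"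
  proof -
    have "G (z + (r - p) *\<^sub>R k) = G (z + r *\<^sub>R k)" for z
      using per[of "z + (r - p) *\<^sub>R k"] by (simp add: algebra_simps)
    then show ?thesis
      using has_integral_shift_cbox[OF I1, of "(r - p) *\<^sub>R k"] by (simp add: algebra_simps)
  qed
  ultimately show ?thesis
    using has_integral_split[OF _ _ k, of _ I2 a b "b \<bullet> k - r" I1] lo' hi' \<open>I = I1 + I2\<close>
    by (simp add: add.commute)
qed

lemma has_integral_periodic_shift:
  fixes G :: "'a::euclidean_space \<Rightarrow> 'b::banach"
  assumes box: "\<And>i. i \<in> Basis \<Longrightarrow> a \<bullet> i < b \<bullet> i"
    and per: "\<And>i z. i \<in> Basis \<Longrightarrow> G (z + (b \<bullet> i - a \<bullet> i) *\<^sub>R i) = G z"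
    and G: "(G has_integral I) (cbox a b)"
  shows "((\<lambda>z. G (z + s)) has_integral I) (cbox a b)"
proof -
  have "((\<lambda>z. G (z + (\<Sum>i\<in>F. (s \<bullet> i) *\<^sub>R i))) has_integral I) (cbox a b)" if "F \<subseteq> Basis" for F
    using finite_subset[OF that finite_Basis] that
  proof (induction F rule: finite_induct)
    case empty
    then show ?case using G by simp
  next
    case (insert k F)
    define H where "H z = G (z + (\<Sum>i\<in>F. (s \<bullet> i) *\<^sub>R i))" for z
    define p where "p = b \<bullet> k - a \<bullet> k"
    have k: "k \<in> Basis" and p: "p > 0" using insert.prems box by (auto simp: p_def)
    have H_per: "H (z + p *\<^sub>R k) = H z" for z
      using per[OF k, of "z + (\<Sum>i\<in>F. (s \<bullet> i) *\<^sub>R i)"] by (simp add: H_def p_def add_ac)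
    define r where "r = p * frac (s \<bullet> k / p)"
    have r: "0 \<le> r" "r \<le> p" using p frac_lt_1[of "s \<bullet> k / p"] by (auto simp: r_def)
    have "s \<bullet> k = r + of_int \<lfloor>s \<bullet> k / p\<rfloor> * p" using p by (simp add: r_def frac_def algebra_simps)
    then have "(s \<bullet> k) *\<^sub>R k = (r + of_int \<lfloor>s \<bullet> k / p\<rfloor> * p) *\<^sub>R k" by simp
    then have "z + (s \<bullet> k) *\<^sub>R k = (z + r *\<^sub>R k) + of_int \<lfloor>s \<bullet> k / p\<rfloor> *\<^sub>R (p *\<^sub>R k)" for z
      by (simp add: algebra_simps)
    then have "H (z + (s \<bullet> k) *\<^sub>R k) = H (z + r *\<^sub>R k)" for z
      using periodic_int_multiple[of H, OF H_per] by metis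
    moreover have "(H has_integral I) (cbox a b)"
      using insert.IH insert.prems by (simp add: H_def[abs_def])
    then have "((\<lambda>z. H (z + r *\<^sub>R k)) has_integral I) (cbox a b)"
      using has_integral_periodic_shift_Basis[OF k, of H, OF H_per[unfolded p_def] r[unfolded p_def]] by blast
    ultimately show ?case
      using insert.hyps by (simp add: H_def add_ac)
  qed
  from this[OF order_refl] show ?thesis by (simp add: euclidean_representation)
qed

lemma integral_periodic_shift:
  fixes G :: "'a::euclidean_space \<Rightarrow> 'b::banach"
  assumes box: "\<And>i. i \<in> Basis \<Longrightarrow> a \<bullet> i < b \<bullet> i"
    and per: "\<And>i z. i \<in> Basis \<Longrightarrow> G (z + (b \<bullet> i - a \<bullet> i) *\<^sub>R i) = G z"
  shows "integral (cbox a b) (\<lambda>z. G (z + s)) = integral (cbox a b) G"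
proof (cases "G integrable_on cbox a b")
  case True
  then show ?thesis
    using has_integral_periodic_shift[OF box per] by (blast intro: integral_unique)
next
  case False
  have "\<not> (\<lambda>z. G (z + s)) integrable_on cbox a b"
  proof
    assume "(\<lambda>z. G (z + s)) integrable_on cbox a b"
    then obtain J where "((\<lambda>z. G (z + s)) has_integral J) (cbox a b)" by blast
    moreover have "G (z + (b \<bullet> i - a \<bullet> i) *\<^sub>R i + s) = G (z + s)" if "i \<in> Basis" for i z
      using per[OF that, of "z + s"] by (simp add: add_ac)
    ultimately have "((\<lambda>z. G (z + - s + s)) has_integral J) (cbox a b)"
      using has_integral_periodic_shift[OF box, where G="\<lambda>z. G (z + s)" and s="-s"] by blast
    then show False using False by (auto simp: integrable_on_def)
  qed
  with False show ?thesis by (simp add: not_integrable_integral)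
qed

lemma torus_periodic_iff:
  "torus_periodic b c f \<longleftrightarrow> (\<forall>z. f (z + (b / c, 0)) = f z \<and> f (z + (0, b)) = f z)"
  unfolding torus_periodic_def by auto

lemma torus_periodic_lattice:
  assumes "torus_periodic b c f"
  shows "f (z + (of_int m * (b / c), of_int n * b)) = f z"
proof -
  have "z + (of_int m * (b / c), of_int n * b) = z + of_int m *\<^sub>R (b / c, 0) + of_int n *\<^sub>R (0, b)"
    by simp
  then show ?thesis
    using assms periodic_int_multiple[of f "(b / c, 0)"] periodic_int_multiple[of f "(0, b)"]
    unfolding torus_periodic_iff by metis
qed

lemma torus_periodic_abs_period:
  assumes "torus_periodic b c f"
  shows "f (z + (\<bar>b / c\<bar>, 0)) = f z"
proof (cases "b / c \<ge> 0")
  case True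
  then show ?thesis using torus_periodic_lattice[OF assms, of z 1 0] by (simp only: abs_of_nonneg) simp
next
  case False
  then have "\<bar>b / c\<bar> = - (b / c)" by linarith
  then show ?thesis using torus_periodic_lattice[OF assms, of z "-1" 0] by (simp only:) simp
qed

lemma torus_periodic_translate:
  assumes "torus_periodic b c f"
  shows "torus_periodic b c (\<lambda>z. f (z + a))"
proof -
  have "f (z + p + a) = f (z + a)" if "\<forall>y. f (y + p) = f y" for z p
    using that[rule_format, of "z + a"] by (simp add: add_ac)
  with assms show ?thesis unfolding torus_periodic_iff by blast
qed

lemma torus_periodic_fundamental_domain:
  assumes f: "torus_periodic b c f" and "b > 0" "c \<noteq> 0"
  obtains w where "w \<in> cbox (0, 0) (\<bar>b / c\<bar>, b)" "\<And>d. f (w + d) = f (z + d)"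
proof -
  define q where "q = \<bar>b / c\<bar>"
  have q: "q > 0" using assms by (simp add: q_def)
  obtain t x where z: "z = (t, x)" by fastforce
  define m n where "m = \<lfloor>t / q\<rfloor>" and "n = \<lfloor>x / b\<rfloor>"
  define w where "w = z - (of_int m * q, of_int n * b)"
  have "w \<in> cbox (0, 0) (q, b)"
    using floor_divide_lower[OF q, of t] floor_divide_upper[OF q, of t]
      floor_divide_lower[OF \<open>b > 0\<close>, of x] floor_divide_upper[OF \<open>b > 0\<close>, of x]
    by (simp add: w_def z m_def n_def algebra_simps)
  moreover have "f (w + d) = f (z + d)" for d
  proof -
    have per: "g (y + (of_int k * q, 0)) = g y" if "torus_periodic b c g" for g :: "real \<times> real \<Rightarrow> 'b" and k y
      using periodic_int_multiple[of g "(q, 0)"] torus_periodic_abs_period[OF that] by (simp add: q_def)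
    have "f (z + d) = f ((w + d) + (of_int m * q, 0) + (0, of_int n * b))"
      by (simp add: w_def algebra_simps)
    also have "\<dots> = f (w + d)"
      using per[OF f] torus_periodic_lattice[OF f, of _ 0 n] by simp
    finally show ?thesis by simp
  qed
  ultimately show ?thesis using that q_def by blast
qed

lemma torus_periodic_bounded:
  fixes f :: "real \<times> real \<Rightarrow> 'b::real_normed_vector"
  assumes "torus_periodic b c f" "b > 0" "c \<noteq> 0" "continuous_on UNIV f"
  shows "bounded (range f)"
proof -
  have "f z \<in> f ` cbox (0, 0) (\<bar>b / c\<bar>, b)" for z
  proof -
    obtain w where "w \<in> cbox (0, 0) (\<bar>b / c\<bar>, b)" "f (w + 0) = f (z + 0)"
      using torus_periodic_fundamental_domain[OF assms(1-3)] by blast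
    then show ?thesis by (metis add_0_right image_eqI)
  qed
  then have "range f \<subseteq> f ` cbox (0, 0) (\<bar>b / c\<bar>, b)" by blast
  moreover have "compact (f ` cbox (0, 0) (\<bar>b / c\<bar>, b))"
    using assms(4) by (intro compact_continuous_image continuous_on_subset[OF assms(4)]) auto
  ultimately show ?thesis using compact_imp_bounded bounded_subset by blast
qed

lemma torus_periodic_uniformly_continuous:
  fixes f :: "real \<times> real \<Rightarrow> 'b::real_normed_vector"
  assumes f: "torus_periodic b c f" and "b > 0" "c \<noteq> 0" "continuous_on UNIV f"
  shows "uniformly_continuous_on UNIV f"
  unfolding uniformly_continuous_on_def
proof (intro allI impI)
  fix e :: real assume "e > 0"
  define q where "q = \<bar>b / c\<bar>"
  define K where "K = cbox (-1, -1) (q + 1, b + 1)"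
  have "uniformly_continuous_on K f"
    unfolding K_def by (rule compact_uniformly_continuous[OF continuous_on_subset[OF assms(4)]]) auto
  then obtain d where d: "d > 0" "\<And>y y'. y \<in> K \<Longrightarrow> y' \<in> K \<Longrightarrow> dist y' y < d \<Longrightarrow> dist (f y') (f y) < e"
    unfolding uniformly_continuous_on_def using \<open>e > 0\<close> by metis
  have "dist (f y') (f y) < e" if "dist y' y < min d 1" for y y'
  proof -
    obtain w where w: "w \<in> cbox (0, 0) (q, b)" "\<And>v. f (w + v) = f (y + v)"
      using torus_periodic_fundamental_domain[OF assms(1-3)] unfolding q_def by blast
    obtain w1 w2 d1 d2 where wd: "w = (w1, w2)" "y' - y = (d1, d2)" by fastforce
    have "\<bar>d1\<bar> < 1" "\<bar>d2\<bar> < 1"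
      using that dist_fst_le[of y' y] dist_snd_le[of y' y] arg_cong[OF wd(2), of fst] arg_cong[OF wd(2), of snd]
      by (auto simp: dist_norm)
    then have "w \<in> K" "w + (y' - y) \<in> K" using w(1) by (auto simp: K_def wd)
    moreover have "dist (w + (y' - y)) w < d" using that by (simp add: dist_norm)
    ultimately have "dist (f (w + (y' - y))) (f (w + 0)) < e" using d(2) by simp
    then show ?thesis by (simp only: w(2)) simp
  qed
  then show "\<exists>d>0. \<forall>y\<in>UNIV. \<forall>y'\<in>UNIV. dist y' y < d \<longrightarrow> dist (f y') (f y) < e"
    using d(1) by (metis min_less_iff_conj zero_less_one UNIV_I)
qed

lemma discrete_action_translate:
  assumes w: "torus_periodic b c w" and "b > 0" "c \<noteq> 0"
  shows "discrete_action b c dt dx L (\<lambda>z. w (z + a)) = discrete_action b c dt dx L w"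
proof -
  define F where "F z = L (w z) (w (z + (dt, 0))) (w (z + (0, dx)))" for z
  have "torus_periodic b c F"
    unfolding torus_periodic_iff
  proof (intro allI)
    fix z
    have "w (z + v + a) = w (z + a)" if "v = (b / c, 0) \<or> v = (0, b)" for v a
      using torus_periodic_translate[OF w, of a] that unfolding torus_periodic_iff by blast
    from this[of _ 0] this[of _ "(dt, 0)"] this[of _ "(0, dx)"]
    show "F (z + (b / c, 0)) = F z \<and> F (z + (0, b)) = F z" unfolding F_def by simp
  qed
  then have per: "F (z + (\<bar>b / c\<bar>, 0)) = F z" "F (z + (0, b)) = F z" for z
    using torus_periodic_abs_period torus_periodic_iff by blast+
  have "integral (cbox (0, 0) (\<bar>b / c\<bar>, b)) (\<lambda>z. F (z + a)) = integral (cbox (0, 0) (\<bar>b / c\<bar>, b)) F"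
    by (rule integral_periodic_shift) (use assms per in \<open>auto simp: Basis_prod_def\<close>)
  moreover have "(\<lambda>(t, x). L (w (t, x)) (w (t + dt, x)) (w (t, x + dx))) = F"
    and "(\<lambda>(t, x). L (w ((t, x) + a)) (w ((t + dt, x) + a)) (w ((t, x + dx) + a))) = (\<lambda>z. F (z + a))"
    by (auto simp: F_def add_ac)
  ultimately show ?thesis unfolding discrete_action_def by simp
qed

section \<open>Riemann means along a closed orbit\<close>

text \<open>For a \<open>P\<close>-periodic \<open>f\<close>, \<open>orbit_mean P N f z\<close> is the Riemann sum approximating the mean
  of \<open>f\<close> over the closed orbit \<open>s \<mapsto> z + s P\<close>, \<open>s \<in> [0, 1]\<close>.\<close>

definition orbit_mean :: "'a::real_vector \<Rightarrow> nat \<Rightarrow> ('a \<Rightarrow> 'b::real_vector) \<Rightarrow> 'a \<Rightarrow> 'b" where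
  "orbit_mean P N f z = (1 / real N) *\<^sub>R (\<Sum>k<N. f (z + (real k / real N) *\<^sub>R P))"

lemma orbit_mean_scaleR:
  "orbit_mean P N (\<lambda>y. r *\<^sub>R f y) z = r *\<^sub>R orbit_mean P N f z"
  unfolding orbit_mean_def by (simp add: scaleR_sum_right)

lemma orbit_mean_step:
  assumes per: "\<And>y. f (y + P) = f y"
  shows "orbit_mean P N f (z + (1 / real N) *\<^sub>R P) = orbit_mean P N f z"
proof (cases "N = 0")
  case False
  define g where "g k = f (z + (real k / real N) *\<^sub>R P)" for k
  have "(\<Sum>k<N. f (z + (1 / real N) *\<^sub>R P + (real k / real N) *\<^sub>R P)) = (\<Sum>k<N. g (Suc k))"
    unfolding g_def by (intro sum.cong) (auto simp: algebra_simps add_divide_distrib)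
  also have "\<dots> = (\<Sum>k<Suc N. g k) - g 0"
    by (subst sum.lessThan_Suc_shift) simp
  also have "\<dots> = (\<Sum>k<N. g k) + (g N - g 0)"
    by simp
  also have "g N = g 0" using False per by (simp add: g_def)
  finally show ?thesis by (simp add: orbit_mean_def g_def)
qed (simp add: orbit_mean_def)

lemma orbit_mean_translate_close:
  fixes f :: "'a::real_normed_vector \<Rightarrow> 'b::real_normed_vector"
  assumes "N > 0" and close: "\<And>y. norm (f (y + d) - f y) \<le> e"
  shows "norm (orbit_mean P N f (z + d) - orbit_mean P N f z) \<le> e"
proof -
  define y where "y k = z + (real k / real N) *\<^sub>R P" for k
  have "orbit_mean P N f (z + d) - orbit_mean P N f z = (1 / real N) *\<^sub>R (\<Sum>k<N. f (y k + d) - f (y k))"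
    unfolding orbit_mean_def y_def by (simp add: sum_subtractf scaleR_diff_right add_ac)
  also have "norm \<dots> \<le> (1 / real N) * (\<Sum>k<N. norm (f (y k + d) - f (y k)))"
    by (simp add: divide_right_mono norm_sum)
  also have "\<dots> \<le> (1 / real N) * (\<Sum>k<N. e)"
    by (intro mult_left_mono sum_mono close) auto
  finally show ?thesis using \<open>N > 0\<close> by simp
qed

lemma has_derivative_orbit_mean:
  fixes f :: "'a::real_normed_vector \<Rightarrow> 'b::real_normed_vector"
  assumes "\<And>y. (f has_derivative D y) (at y)"
  shows "(orbit_mean P N f has_derivative (\<lambda>k. orbit_mean P N (\<lambda>y. D y k) z)) (at z)"
  unfolding orbit_mean_def
  by (intro has_derivative_scaleR_right has_derivative_sum has_derivative_compose[OF _ assms, of "\<lambda>y. y + _", simplified]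
      derivative_eq_intros) auto

lemma orbit_mean_reduce_to_step:
  assumes per: "\<And>y. f (y + P) = f y" and "N > 0"
  obtains r z' where "0 \<le> r" "r \<le> 1 / real N" "z + s *\<^sub>R P = z' + r *\<^sub>R P"
    "orbit_mean P N f z' = orbit_mean P N f z"
proof
  define m where "m = \<lfloor>s * real N\<rfloor>"
  show "z + s *\<^sub>R P = (z + of_int m *\<^sub>R ((1 / real N) *\<^sub>R P)) + (s - of_int m / real N) *\<^sub>R P"
    by (simp add: algebra_simps)
  show "orbit_mean P N f (z + of_int m *\<^sub>R ((1 / real N) *\<^sub>R P)) = orbit_mean P N f z"
    by (rule periodic_int_multiple) (rule orbit_mean_step[of f, OF per])
  have "of_int m \<le> s * real N" "s * real N - of_int m \<le> 1"
    unfolding m_def by linarith+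
  moreover have "s - of_int m / real N = (s * real N - of_int m) / real N"
    using \<open>N > 0\<close> by (simp add: field_simps)
  ultimately show "0 \<le> s - of_int m / real N" "s - of_int m / real N \<le> 1 / real N"
    by (simp_all add: divide_right_mono)
qed

lemma orbit_mean_nearly_invariant:
  fixes f :: "'a::real_normed_vector \<Rightarrow> 'b::real_normed_vector"
  assumes per: "\<And>y. f (y + P) = f y" and uc: "uniformly_continuous_on UNIV f" and "e > 0"
  shows "\<forall>\<^sub>F N in sequentially. \<forall>z s. norm (orbit_mean P N f (z + s *\<^sub>R P) - orbit_mean P N f z) \<le> e"
proof -
  obtain d where "d > 0" and "\<forall>y\<in>UNIV. \<forall>y'\<in>UNIV. dist y' y < d \<longrightarrow> dist (f y') (f y) < e"
    using uc \<open>e > 0\<close> unfolding uniformly_continuous_on_def by blast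
  then have d: "\<And>y y'. dist y' y < d \<Longrightarrow> dist (f y') (f y) < e" by blast
  have "\<forall>\<^sub>F N in sequentially. norm P / real N < d"
    using order_tendstoD(2)[OF lim_const_over_n \<open>d > 0\<close>] by simp
  moreover have "\<forall>\<^sub>F N in sequentially. N > 0" by (simp add: eventually_gt_at_top)
  ultimately show ?thesis
  proof eventually_elim
    case (elim N)
    show ?case
    proof (intro allI)
      fix z s
      obtain r z' where r: "0 \<le> r" "r \<le> 1 / real N" and z': "z + s *\<^sub>R P = z' + r *\<^sub>R P"
        "orbit_mean P N f z' = orbit_mean P N f z"
        using orbit_mean_reduce_to_step[of f, OF per \<open>N > 0\<close>] by blast
      have "r * norm P \<le> norm P / real N"
        using mult_right_mono[OF r(2) norm_ge_zero[of P]] by simp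
      then have "norm (f (y + r *\<^sub>R P) - f y) \<le> e" for y
        using r elim d[of "y + r *\<^sub>R P" y] by (simp add: dist_norm)
      then show "norm (orbit_mean P N f (z + s *\<^sub>R P) - orbit_mean P N f z) \<le> e"
        using orbit_mean_translate_close[of N f, OF \<open>N > 0\<close>] z' by metis
    qed
  qed
qed

lemma has_derivative_periodic:
  fixes f :: "'a::real_normed_vector \<Rightarrow> 'b::real_normed_vector"
  assumes D: "\<And>y. (f has_derivative D y) (at y)" and per: "\<And>y. f (y + p) = f y"
  shows "D (y + p) = D y"
proof -
  have "((\<lambda>x. x + p) has_derivative (\<lambda>h. h)) (at y)"
    by (auto intro!: derivative_eq_intros)
  from has_derivative_compose[OF this D]
  have "((\<lambda>x. f (x + p)) has_derivative D (y + p)) (at y)" by simp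
  moreover have "(\<lambda>x. f (x + p)) = f" using per by (rule ext)
  ultimately show ?thesis using has_derivative_unique[OF _ D] by metis
qed

lemma has_derivative_orbit_mean_along_period:
  fixes f :: "'a::real_normed_vector \<Rightarrow> 'b::real_normed_vector"
  assumes D: "\<And>y. (f has_derivative D y) (at y)"
  shows "((\<lambda>s. orbit_mean P N f (z + s *\<^sub>R P)) has_derivative
      (\<lambda>d. d *\<^sub>R orbit_mean P N (\<lambda>y. D y P) (z + s *\<^sub>R P))) (at s)"
proof -
  have "((\<lambda>s. z + s *\<^sub>R P) has_derivative (\<lambda>d. d *\<^sub>R P)) (at s)"
    by (auto intro!: derivative_eq_intros)
  from has_derivative_compose[OF this has_derivative_orbit_mean[OF D]]
  have "((\<lambda>s. orbit_mean P N f (z + s *\<^sub>R P)) has_derivative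
      (\<lambda>d. orbit_mean P N (\<lambda>y. D y (d *\<^sub>R P)) (z + s *\<^sub>R P))) (at s)" .
  moreover have "D y (d *\<^sub>R P) = d *\<^sub>R D y P" for y d
    using linear_scale[OF has_derivative_linear[OF D]] .
  ultimately show ?thesis by (simp add: orbit_mean_scaleR)
qed

lemma norm_derivative_le_oscillation:
  fixes g :: "real \<Rightarrow> 'b::real_normed_vector"
  assumes "H > 0" "g H = g 0"
    and g': "\<And>s. (g has_derivative (\<lambda>d. d *\<^sub>R g' s)) (at s)"
    and osc: "\<And>s. norm (g' s - g' 0) \<le> e"
  shows "norm (g' 0) \<le> e"
proof -
  define \<phi> where "\<phi> s = g s - s *\<^sub>R g' 0" for s
  have "(\<phi> has_derivative (\<lambda>d. d *\<^sub>R g' s - d *\<^sub>R g' 0)) (at s)" for s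
    unfolding \<phi>_def by (rule has_derivative_diff[OF g' has_derivative_scaleR_left[OF has_derivative_ident]])
  then have "(\<phi> has_derivative (\<lambda>d. d *\<^sub>R (g' s - g' 0))) (at s within {0..H})" for s
    by (simp add: scaleR_diff_right has_derivative_at_withinI)
  moreover have "onorm (\<lambda>d. d *\<^sub>R (g' s - g' 0)) \<le> e" for s
  proof (rule onorm_le)
    show "norm (d *\<^sub>R (g' s - g' 0)) \<le> e * norm d" for d
      using osc[of s] by (metis abs_ge_zero mult.commute mult_left_mono norm_scaleR real_norm_def)
  qed
  ultimately have "norm (\<phi> H - \<phi> 0) \<le> e * norm (H - 0)"
    using \<open>H > 0\<close> by (intro differentiable_bound[of "{0..H}" \<phi>]) auto
  then have "H * norm (g' 0) \<le> H * e"
    using assms(1,2) by (simp add: \<phi>_def mult.commute)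
  then show ?thesis using \<open>H > 0\<close> by simp
qed

lemma orbit_mean_derivative_along_period:
  fixes f :: "'a::real_normed_vector \<Rightarrow> 'b::real_normed_vector"
  assumes D: "\<And>y. (f has_derivative D y) (at y)" and per: "\<And>y. f (y + P) = f y"
    and uc: "uniformly_continuous_on UNIV (\<lambda>y. D y P)" and "e > 0"
  shows "\<forall>\<^sub>F N in sequentially. \<forall>z. norm (orbit_mean P N (\<lambda>y. D y P) z) \<le> e"
proof -
  have "D (y + P) P = D y P" for y using has_derivative_periodic[OF D per] by simp
  from orbit_mean_nearly_invariant[of "\<lambda>y. D y P", OF this uc \<open>e > 0\<close>] eventually_gt_at_top[of 0]
  show ?thesis
  proof eventually_elim
    case (elim N)
    show ?case
    proof
      fix z
      \<comment> \<open>The mean is invariant under the step \<open>P /\<^sub>R N\<close>, so its derivative along \<open>P\<close> is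
        bounded by its oscillation along the orbit.\<close>
      show "norm (orbit_mean P N (\<lambda>y. D y P) z) \<le> e"
        using norm_derivative_le_oscillation[of "1 / real N" "\<lambda>s. orbit_mean P N f (z + s *\<^sub>R P)"
            "\<lambda>s. orbit_mean P N (\<lambda>y. D y P) (z + s *\<^sub>R P)" e]
          elim orbit_mean_step[of f P N z, OF per] has_derivative_orbit_mean_along_period[OF D]
        by simp
    qed
  qed
qed

lemma linear_Pair_decompose:
  assumes "linear D"
  shows "D (s, t) = s *\<^sub>R D (1, 0) + t *\<^sub>R D (0, 1)"
proof -
  have "D (s *\<^sub>R (1, 0) + t *\<^sub>R (0, 1)) = s *\<^sub>R D (1, 0) + t *\<^sub>R D (0, 1)"
    by (simp only: linear_add[OF assms] linear_scale[OF assms])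
  then show ?thesis by simp
qed

lemma C1_map_iff:
  "C1_map f \<longleftrightarrow>
     (\<exists>D. (\<forall>z. (f has_derivative D z) (at z)) \<and> (\<forall>k. continuous_on UNIV (\<lambda>z. D z k)))"
proof
  assume "C1_map f"
  then obtain D where D: "\<And>z. (f has_derivative D z) (at z)"
    and "continuous_on UNIV (\<lambda>z. D z (1, 0))" "continuous_on UNIV (\<lambda>z. D z (0, 1))"
    unfolding C1_map_def by blast
  then have "continuous_on UNIV (\<lambda>z. s *\<^sub>R D z (1, 0) + t *\<^sub>R D z (0, 1))" for s t
    by (intro continuous_intros)
  moreover have "s *\<^sub>R D z (1, 0) + t *\<^sub>R D z (0, 1) = D z (s, t)" for z s t
    by (rule linear_Pair_decompose[OF has_derivative_linear[OF D], symmetric])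
  ultimately have "continuous_on UNIV (\<lambda>z. D z k)" for k
    by (cases k) (simp only:)
  with D show "\<exists>D. (\<forall>z. (f has_derivative D z) (at z)) \<and> (\<forall>k. continuous_on UNIV (\<lambda>z. D z k))"
    by blast
qed (unfold C1_map_def, blast)

lemma C1_map_add:
  assumes "C1_map f" "C1_map g"
  shows "C1_map (\<lambda>z. f z + g z)"
proof -
  obtain Df where "\<And>z. (f has_derivative Df z) (at z)" "\<And>k. continuous_on UNIV (\<lambda>z. Df z k)"
    using assms(1) unfolding C1_map_iff by blast
  moreover obtain Dg where "\<And>z. (g has_derivative Dg z) (at z)" "\<And>k. continuous_on UNIV (\<lambda>z. Dg z k)"
    using assms(2) unfolding C1_map_iff by blast
  ultimately show ?thesis
    unfolding C1_map_iff
    by (intro exI[of _ "\<lambda>z k. Df z k + Dg z k"]) (simp add: has_derivative_add continuous_on_add)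
qed

lemma C1_map_scaleR:
  assumes "C1_map f"
  shows "C1_map (\<lambda>z. r *\<^sub>R f z)"
proof -
  obtain D where "\<And>z. (f has_derivative D z) (at z)" "\<And>k. continuous_on UNIV (\<lambda>z. D z k)"
    using assms unfolding C1_map_iff by blast
  then show ?thesis
    unfolding C1_map_iff
    by (intro exI[of _ "\<lambda>z k. r *\<^sub>R D z k"]) (simp add: has_derivative_scaleR_right continuous_on_scaleR)
qed

lemma C1_map_compose_affine:
  assumes f: "C1_map f" and g: "linear g"
  shows "C1_map (\<lambda>z. f (g z + a))"
proof -
  obtain D where D: "\<And>z. (f has_derivative D z) (at z)" "\<And>k. continuous_on UNIV (\<lambda>z. D z k)"
    using f unfolding C1_map_iff by blast
  have lin: "bounded_linear g" using g by (simp add: linear_linear)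
  have "((\<lambda>z. g z + a) has_derivative g) (at z)" for z
    using has_derivative_add[OF bounded_linear_imp_has_derivative[OF lin] has_derivative_const] by simp
  from has_derivative_compose[OF this D(1)]
  have "((\<lambda>z. f (g z + a)) has_derivative (\<lambda>k. D (g z + a) (g k))) (at z)" for z .
  moreover have "continuous_on UNIV (\<lambda>z. g z + a)"
    using linear_continuous_on[OF lin] by (intro continuous_intros)
  then have "continuous_on UNIV (\<lambda>z. D (g z + a) (g k))" for k
    using continuous_on_compose2[OF D(2)] by blast
  ultimately show ?thesis
    unfolding C1_map_iff by (intro exI[of _ "\<lambda>z k. D (g z + a) (g k)"]) simp
qed

lemma W_space_add: "f \<in> W_space b c \<Longrightarrow> g \<in> W_space b c \<Longrightarrow> (\<lambda>z. f z + g z) \<in> W_space b c"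
  unfolding W_space_def torus_periodic_def by (simp add: C1_map_add)

lemma W_space_scaleR: "f \<in> W_space b c \<Longrightarrow> (\<lambda>z. r *\<^sub>R f z) \<in> W_space b c"
  unfolding W_space_def torus_periodic_def by (simp add: C1_map_scaleR)

lemma W_space_translate: "f \<in> W_space b c \<Longrightarrow> (\<lambda>z. f (z + a)) \<in> W_space b c"
  using C1_map_compose_affine[of f "\<lambda>z. z" a] torus_periodic_translate[of b c f a]
  by (simp add: W_space_def linear_id[unfolded id_def])

lemma W_space_sum:
  assumes "finite A" "\<And>k. k \<in> A \<Longrightarrow> g k \<in> W_space b c"
  shows "(\<lambda>z. \<Sum>k\<in>A. g k z) \<in> W_space b c"
  using assms
proof (induction A rule: finite_induct)
  case empty
  have "C1_map (\<lambda>z. 0 :: real ^ 'd)"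
    unfolding C1_map_def by (intro exI[of _ "\<lambda>z k. 0"]) simp
  then show ?case by (simp add: W_space_def torus_periodic_def)
next
  case (insert k A)
  then show ?case using W_space_add[of "g k" b c "\<lambda>z. \<Sum>k\<in>A. g k z"] by simp
qed

lemma W_space_orbit_mean: "v \<in> W_space b c \<Longrightarrow> orbit_mean P N v \<in> W_space b c"
  unfolding orbit_mean_def by (intro W_space_scaleR W_space_sum W_space_translate) auto

lemma W_space_derivative:
  assumes "v \<in> W_space b c"
  obtains D where "\<And>z. (v has_derivative D z) (at z)" "\<And>k. continuous_on UNIV (\<lambda>z. D z k)"
    "\<And>k. torus_periodic b c (\<lambda>z. D z k)"
proof -
  obtain D where D: "\<And>z. (v has_derivative D z) (at z)" "\<And>k. continuous_on UNIV (\<lambda>z. D z k)"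
    using assms unfolding W_space_def C1_map_iff by blast
  have "torus_periodic b c v" using assms unfolding W_space_def by blast
  then have "v (z + (b / c, 0)) = v z" "v (z + (0, b)) = v z" for z
    using torus_periodic_iff by blast+
  then have "torus_periodic b c (\<lambda>z. D z k)" for k
    unfolding torus_periodic_iff using has_derivative_periodic[OF D(1)] by metis
  with D show ?thesis using that by blast
qed

text \<open>\<open>C1_norm\<close> is built from suprema, which only behave as expected on bounded ranges.\<close>

lemma W_space_bounded:
  assumes "v \<in> W_space b c" "b > 0" "c \<noteq> 0"
  shows "bdd_above (range (\<lambda>z. norm (v z)))"
    and "bdd_above (range (\<lambda>z. norm (frechet_derivative v (at z) k)))"
proof -
  obtain D where D: "\<And>z. (v has_derivative D z) (at z)" "\<And>k. continuous_on UNIV (\<lambda>z. D z k)"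
    "\<And>k. torus_periodic b c (\<lambda>z. D z k)"
    using W_space_derivative[OF assms(1)] by blast
  have "continuous_on UNIV v"
    using D(1) has_derivative_continuous by (blast intro: continuous_at_imp_continuous_on)
  then have "bounded (range v)"
    using assms torus_periodic_bounded unfolding W_space_def by blast
  then show "bdd_above (range (\<lambda>z. norm (v z)))"
    by (intro bounded_imp_bdd_above) (simp add: bounded_norm_comp)
  have "bounded (range (\<lambda>z. D z k))"
    using torus_periodic_bounded[OF D(3) assms(2,3) D(2)] .
  moreover have "frechet_derivative v (at z) = D z" for z
    using frechet_derivative_at[OF D(1)] by simp
  ultimately show "bdd_above (range (\<lambda>z. norm (frechet_derivative v (at z) k)))"
    by (intro bounded_imp_bdd_above) (simp add: bounded_norm_comp)
qed

lemma C1_norm_scaleR_le: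
  assumes "v \<in> W_space b c" "b > 0" "c \<noteq> 0"
  shows "C1_norm (\<lambda>z. r *\<^sub>R v z) \<le> \<bar>r\<bar> * C1_norm v"
proof -
  have Sup_le: "Sup (range (\<lambda>z. \<bar>r\<bar> * g z)) \<le> \<bar>r\<bar> * Sup (range g)"
    if "bdd_above (range g)" for g :: "real \<times> real \<Rightarrow> real"
  proof -
    have "g z \<le> Sup (range g)" for z using cSup_upper[OF _ that] by blast
    then show ?thesis by (intro cSup_least) (auto intro: mult_left_mono)
  qed
  obtain D where D: "\<And>z. (v has_derivative D z) (at z)" "\<And>k. continuous_on UNIV (\<lambda>z. D z k)"
    "\<And>k. torus_periodic b c (\<lambda>z. D z k)"
    using W_space_derivative[OF assms(1)] by blast
  have "frechet_derivative (\<lambda>z. r *\<^sub>R v z) (at z) = (\<lambda>k. r *\<^sub>R D z k)" for z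
    by (rule frechet_derivative_at[OF has_derivative_scaleR_right[OF D(1)], symmetric])
  moreover have "frechet_derivative v (at z) = D z" for z
    by (rule frechet_derivative_at[OF D(1), symmetric])
  ultimately have "frechet_derivative (\<lambda>z. r *\<^sub>R v z) (at z) = (\<lambda>k. r *\<^sub>R frechet_derivative v (at z) k)" for z
    by simp
  then have "C1_norm (\<lambda>z. r *\<^sub>R v z) =
      Sup (range (\<lambda>z. \<bar>r\<bar> * norm (v z)))
      + Sup (range (\<lambda>z. \<bar>r\<bar> * norm (frechet_derivative v (at z) (1, 0))))
      + Sup (range (\<lambda>z. \<bar>r\<bar> * norm (frechet_derivative v (at z) (0, 1))))"
    unfolding C1_norm_def by simp
  also have "\<dots> \<le> \<bar>r\<bar> * Sup (range (\<lambda>z. norm (v z)))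
      + \<bar>r\<bar> * Sup (range (\<lambda>z. norm (frechet_derivative v (at z) (1, 0))))
      + \<bar>r\<bar> * Sup (range (\<lambda>z. norm (frechet_derivative v (at z) (0, 1))))"
    by (intro add_mono Sup_le W_space_bounded[OF assms])
  also have "\<dots> = \<bar>r\<bar> * C1_norm v"
    unfolding C1_norm_def by (simp only: distrib_left)
  finally show ?thesis .
qed

lemma abs_C1_norm_le:
  assumes "\<And>z. norm (h z) \<le> e"
    and "\<And>z. norm (frechet_derivative h (at z) (1, 0)) \<le> e"
    and "\<And>z. norm (frechet_derivative h (at z) (0, 1)) \<le> e"
  shows "\<bar>C1_norm h\<bar> \<le> 3 * e"
proof -
  have Sup: "0 \<le> Sup (range g) \<and> Sup (range g) \<le> e"
    if "\<And>z. g z \<le> e" "\<And>z. 0 \<le> g z" for g :: "real \<times> real \<Rightarrow> real"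
  proof
    have "bdd_above (range g)" using that(1) by (rule bdd_aboveI2)
    then show "0 \<le> Sup (range g)" using that(2) by (meson cSup_upper order_trans rangeI)
    show "Sup (range g) \<le> e" using that(1) by (auto intro: cSup_least)
  qed
  from Sup[of "\<lambda>z. norm (h z)"] Sup[of "\<lambda>z. norm (frechet_derivative h (at z) (1, 0))"]
    Sup[of "\<lambda>z. norm (frechet_derivative h (at z) (0, 1))"] assms
  show ?thesis
    unfolding C1_norm_def by (simp add: abs_le_iff)
qed

section \<open>Approximation by travelling waves\<close>

text \<open>The orbit of \<open>(t, x)\<close> under the wave flow meets the line \<open>t = 0\<close> at \<open>wave_foot c (t, x)\<close>,
  so \<open>f \<circ> wave_foot c\<close> is a travelling wave for every \<open>f \<in> W\<close>.\<close>

definition wave_foot :: "real \<Rightarrow> real \<times> real \<Rightarrow> real \<times> real" where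
  "wave_foot c z = (0, snd z - c * fst z)"

lemma linear_wave_foot: "linear (wave_foot c)"
  by (rule linearI) (auto simp: wave_foot_def algebra_simps)

lemma wave_foot_on_orbit:
  assumes "b \<noteq> 0" "c \<noteq> 0"
  shows "wave_foot c z = z + (- c * fst z / b) *\<^sub>R (b / c, b)"
  using assms by (cases z) (simp add: wave_foot_def)

lemma travelling_wave_wave_foot:
  assumes f: "f \<in> W_space b c" and "c \<noteq> 0"
  shows "(\<lambda>z. f (wave_foot c z)) \<in> Sigma_space b c"
proof -
  have per: "f (z + (0, b)) = f z" for z
    using f torus_periodic_iff unfolding W_space_def by blast
  have "C1_map (\<lambda>z. f (wave_foot c z))"
    using C1_map_compose_affine[OF _ linear_wave_foot, of f c 0] f by (simp add: W_space_def)
  moreover have "torus_periodic b c (\<lambda>z. f (wave_foot c z))"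
    unfolding torus_periodic_def
  proof (intro allI conjI)
    fix t x
    show "f (wave_foot c (t + b / c, x)) = f (wave_foot c (t, x))"
      using per[of "wave_foot c (t + b / c, x)"] \<open>c \<noteq> 0\<close> by (simp add: wave_foot_def algebra_simps)
    show "f (wave_foot c (t, x + b)) = f (wave_foot c (t, x))"
      using per[of "wave_foot c (t, x)"] by (simp add: wave_foot_def algebra_simps)
  qed
  moreover have "wave_foot c (t + s, x + c * s) = wave_foot c (t, x)" for s t x
    by (simp add: wave_foot_def algebra_simps)
  ultimately show ?thesis by (simp add: Sigma_space_def W_space_def)
qed

lemma frechet_derivative_wave_defect:
  assumes DA: "\<And>z. (A has_derivative DA z) (at z)"
  shows "frechet_derivative (\<lambda>z. A z - A (wave_foot c z)) (at z)
    = (\<lambda>k. DA z k - DA (wave_foot c z) (wave_foot c k))"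
proof -
  have "((\<lambda>z. A z - A (wave_foot c z)) has_derivative
      (\<lambda>k. DA z k - DA (wave_foot c z) (wave_foot c k))) (at z)"
    using has_derivative_compose[OF linear_imp_has_derivative[OF linear_wave_foot] DA]
    by (intro has_derivative_diff DA)
  then show ?thesis by (rule frechet_derivative_at[symmetric])
qed

lemma wave_defect_derivative_along_t:
  assumes "linear D1" "linear D2" "b \<noteq> 0" "c \<noteq> 0"
  shows "D1 (1, 0) - D2 (wave_foot c (1, 0)) = (c / b) *\<^sub>R D1 (b / c, b) - c *\<^sub>R (D1 (0, 1) - D2 (0, 1))"
proof -
  have "D1 (b / c, b) = (b / c) *\<^sub>R D1 (1, 0) + b *\<^sub>R D1 (0, 1)"
    by (rule linear_Pair_decompose[OF assms(1)])
  moreover have "D2 (wave_foot c (1, 0)) = (- c) *\<^sub>R D2 (0, 1)"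
    using linear_Pair_decompose[OF assms(2), of 0 "- c"] by (simp add: wave_foot_def)
  ultimately show ?thesis using assms(3,4) by (simp add: algebra_simps)
qed

lemma C1_norm_wave_defect_le:
  fixes A :: "real \<times> real \<Rightarrow> real ^ 'd" and b c :: real
  defines "P \<equiv> (b / c, b)"
  assumes "b > 0" "c \<noteq> 0"
    and DA: "\<And>z. (A has_derivative DA z) (at z)"
    and A_orbit: "\<And>z s. norm (A (z + s *\<^sub>R P) - A z) \<le> e"
    and DA_orbit: "\<And>z s. norm (DA (z + s *\<^sub>R P) (0, 1) - DA z (0, 1)) \<le> e"
    and DA_along: "\<And>z. norm (DA z P) \<le> e"
  shows "\<bar>C1_norm (\<lambda>z. A z - A (wave_foot c z))\<bar> \<le> 3 * ((1 + \<bar>c / b\<bar> + \<bar>c\<bar>) * e)"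
proof -
  define M where "M = 1 + \<bar>c / b\<bar> + \<bar>c\<bar>"
  define h where "h z = A z - A (wave_foot c z)" for z
  have "e \<ge> 0" using A_orbit[of 0 0] norm_ge_zero order_trans by blast
  moreover have "1 \<le> M" by (simp add: M_def)
  ultimately have e_le: "e \<le> M * e" using mult_right_mono[of 1 M e] by simp
  have foot: "wave_foot c z = z + (- c * fst z / b) *\<^sub>R P" for z
    unfolding P_def using assms by (intro wave_foot_on_orbit) simp_all
  have A_foot: "norm (A z - A (wave_foot c z)) \<le> e" for z
    unfolding foot by (subst norm_minus_commute) (rule A_orbit)
  have DA_foot: "norm (DA z (0, 1) - DA (wave_foot c z) (0, 1)) \<le> e" for z
    unfolding foot by (subst norm_minus_commute) (rule DA_orbit)
  have fd: "frechet_derivative h (at z) = (\<lambda>k. DA z k - DA (wave_foot c z) (wave_foot c k))" for z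
    unfolding h_def[abs_def] by (rule frechet_derivative_wave_defect[OF DA])
  have "norm (h z) \<le> M * e" for z
    unfolding h_def by (rule order_trans[OF A_foot e_le])
  moreover have "norm (frechet_derivative h (at z) (1, 0)) \<le> M * e" for z
  proof -
    have "frechet_derivative h (at z) (1, 0)
        = (c / b) *\<^sub>R DA z P - c *\<^sub>R (DA z (0, 1) - DA (wave_foot c z) (0, 1))"
      unfolding fd P_def using assms
      by (intro wave_defect_derivative_along_t has_derivative_linear[OF DA]) simp_all
    also have "norm \<dots> \<le> \<bar>c / b\<bar> * e + \<bar>c\<bar> * e"
      using DA_along[of z] DA_foot[of z]
      by (intro order_trans[OF norm_triangle_ineq4] add_mono)
         (simp_all only: norm_scaleR real_norm_def mult_left_mono abs_ge_zero)
    also have "\<dots> \<le> M * e" using \<open>e \<ge> 0\<close> by (simp add: M_def algebra_simps)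
    finally show ?thesis .
  qed
  moreover have "norm (frechet_derivative h (at z) (0, 1)) \<le> M * e" for z
    using order_trans[OF DA_foot e_le] by (simp add: fd wave_foot_def)
  ultimately have "\<bar>C1_norm h\<bar> \<le> 3 * (M * e)"
    by (rule abs_C1_norm_le)
  then show ?thesis by (simp add: h_def[abs_def] M_def)
qed

lemma orbit_mean_wave_defect_tendsto_0:
  fixes v :: "real \<times> real \<Rightarrow> real ^ 'd" and b c :: real
  defines "P \<equiv> (b / c, b)"
  assumes v: "v \<in> W_space b c" and "b > 0" "c \<noteq> 0"
  shows "(\<lambda>N. C1_norm (\<lambda>z. orbit_mean P N v z - orbit_mean P N v (wave_foot c z))) \<longlonglongrightarrow> 0"
proof -
  obtain D where D: "\<And>z. (v has_derivative D z) (at z)" "\<And>k. continuous_on UNIV (\<lambda>z. D z k)"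
    "\<And>k. torus_periodic b c (\<lambda>z. D z k)"
    using W_space_derivative[OF v] by blast
  have per: "g (y + P) = g y" if "torus_periodic b c g" for g :: "real \<times> real \<Rightarrow> real ^ 'd" and y
    using torus_periodic_lattice[OF that, of y 1 1] by (simp add: P_def)
  have uc: "uniformly_continuous_on UNIV g" if "torus_periodic b c g" "continuous_on UNIV g"
    for g :: "real \<times> real \<Rightarrow> real ^ 'd"
    using torus_periodic_uniformly_continuous[OF that(1) \<open>b > 0\<close> \<open>c \<noteq> 0\<close> that(2)] .
  have tp_v: "torus_periodic b c v" using v unfolding W_space_def by blast
  have "continuous_on UNIV v"
    using D(1) has_derivative_continuous by (blast intro: continuous_at_imp_continuous_on)
  then have uc_v: "uniformly_continuous_on UNIV v"
    using uc[OF tp_v] by blast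
  define M where "M = 1 + \<bar>c / b\<bar> + \<bar>c\<bar>"
  have M: "M > 0" by (simp add: M_def add_pos_nonneg)
  show ?thesis
    unfolding tendsto_iff
  proof (intro allI impI)
    fix \<epsilon> :: real assume "\<epsilon> > 0"
    define e where "e = \<epsilon> / (6 * M)"
    have e: "e > 0" using \<open>\<epsilon> > 0\<close> M by (simp add: e_def)
    from orbit_mean_nearly_invariant[of v P, OF per[OF tp_v] uc_v e]
      orbit_mean_nearly_invariant[of "\<lambda>y. D y (0, 1)" P, OF per[OF D(3)] uc[OF D(3) D(2)] e]
      orbit_mean_derivative_along_period[of v D P, OF D(1) per[OF tp_v] uc[OF D(3) D(2)] e]
    show "\<forall>\<^sub>F N in sequentially.
        dist (C1_norm (\<lambda>z. orbit_mean P N v z - orbit_mean P N v (wave_foot c z))) 0 < \<epsilon>"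
    proof eventually_elim
      case (elim N)
      have "\<bar>C1_norm (\<lambda>z. orbit_mean P N v z - orbit_mean P N v (wave_foot c z))\<bar> \<le> 3 * (M * e)"
        unfolding M_def P_def
        by (rule C1_norm_wave_defect_le[OF \<open>b > 0\<close> \<open>c \<noteq> 0\<close> has_derivative_orbit_mean[OF D(1)]])
           (use elim[unfolded P_def] in blast)+
      also have "\<dots> < \<epsilon>" using \<open>\<epsilon> > 0\<close> M by (simp add: e_def)
      finally show ?case by simp
    qed
  qed
qed

lemma additive_functional_sum:
  assumes add: "\<And>f g. f \<in> W_space b c \<Longrightarrow> g \<in> W_space b c \<Longrightarrow> T (\<lambda>z. f z + g z) = T f + T g"
    and "finite F" "\<And>k. k \<in> F \<Longrightarrow> g k \<in> W_space b c"
  shows "T (\<lambda>z. \<Sum>k\<in>F. g k z) = (\<Sum>k\<in>F. (T (g k) :: real))"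
  using assms(2,3)
proof (induction F rule: finite_induct)
  case empty
  have "(\<lambda>z. 0) \<in> W_space b c" using W_space_sum[of "{}"] by simp
  then show ?case using add[of "\<lambda>z. 0" "\<lambda>z. 0"] by simp
next
  case (insert k F)
  then show ?case using add[OF _ W_space_sum[of F g]] by simp
qed

lemma wave_invariant_functional_orbit_mean:
  fixes T :: "(real \<times> real \<Rightarrow> real ^ 'd) \<Rightarrow> real"
  assumes "c \<noteq> 0"
    and add: "\<And>f g. f \<in> W_space b c \<Longrightarrow> g \<in> W_space b c \<Longrightarrow> T (\<lambda>z. f z + g z) = T f + T g"
    and scale: "\<And>f r. f \<in> W_space b c \<Longrightarrow> T (\<lambda>z. r *\<^sub>R f z) = r * T f"
    and invariant: "\<And>f s. f \<in> W_space b c \<Longrightarrow> T (\<lambda>z. f (z + (s, c * s))) = T f"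
    and v: "v \<in> W_space b c" and "N > 0"
  shows "T (orbit_mean (b / c, b) N v) = T v"
proof -
  define P where "P = (b / c, b)"
  have shift: "T (\<lambda>z. v (z + r *\<^sub>R P)) = T v" for r
  proof -
    have "r *\<^sub>R P = (r * (b / c), c * (r * (b / c)))" using \<open>c \<noteq> 0\<close> by (simp add: P_def)
    then show ?thesis using invariant[OF v, of "r * (b / c)"] by simp
  qed
  have "T (orbit_mean P N v) = (1 / real N) * T (\<lambda>z. \<Sum>k<N. v (z + (real k / real N) *\<^sub>R P))"
    unfolding orbit_mean_def by (rule scale[OF W_space_sum]) (auto intro: W_space_translate v)
  also have "T (\<lambda>z. \<Sum>k<N. v (z + (real k / real N) *\<^sub>R P)) = (\<Sum>k<N. T (\<lambda>z. v (z + (real k / real N) *\<^sub>R P)))"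
    by (rule additive_functional_sum[OF add]) (auto intro: W_space_translate v)
  also have "(1 / real N) * \<dots> = T v" using \<open>N > 0\<close> by (simp add: shift)
  finally show ?thesis unfolding P_def .
qed

lemma wave_invariant_functional_vanishes:
  fixes T :: "(real \<times> real \<Rightarrow> real ^ 'd) \<Rightarrow> real"
  assumes "b > 0" "c \<noteq> 0"
    and add: "\<And>f g. f \<in> W_space b c \<Longrightarrow> g \<in> W_space b c \<Longrightarrow> T (\<lambda>z. f z + g z) = T f + T g"
    and scale: "\<And>f r. f \<in> W_space b c \<Longrightarrow> T (\<lambda>z. r *\<^sub>R f z) = r * T f"
    and bound: "\<And>f. f \<in> W_space b c \<Longrightarrow> \<bar>T f\<bar> \<le> K * C1_norm f"
    and invariant: "\<And>f s. f \<in> W_space b c \<Longrightarrow> T (\<lambda>z. f (z + (s, c * s))) = T f"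
    and vanishes: "\<And>w. w \<in> Sigma_space b c \<Longrightarrow> T w = 0"
    and v: "v \<in> W_space b c"
  shows "T v = 0"
proof -
  define A where "A N = orbit_mean (b / c, b) N v" for N
  have ev: "\<forall>\<^sub>F N in sequentially. \<bar>T v\<bar> \<le> K * C1_norm (\<lambda>z. A N z - A N (wave_foot c z))"
  proof (intro eventually_mono[OF eventually_gt_at_top[of 0]])
    fix N :: nat assume "N > 0"
    have AN: "A N \<in> W_space b c" unfolding A_def using v by (rule W_space_orbit_mean)
    have wave: "(\<lambda>z. A N (wave_foot c z)) \<in> Sigma_space b c"
      using travelling_wave_wave_foot[OF AN \<open>c \<noteq> 0\<close>] .
    then have wave_W: "(\<lambda>z. (- 1) *\<^sub>R A N (wave_foot c z)) \<in> W_space b c"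
      unfolding Sigma_space_def using W_space_scaleR by blast
    have defect_W: "(\<lambda>z. A N z - A N (wave_foot c z)) \<in> W_space b c"
      using W_space_add[OF AN wave_W] by simp
    have "T (\<lambda>z. A N z - A N (wave_foot c z)) = T (A N) - T (\<lambda>z. A N (wave_foot c z))"
      using add[OF AN wave_W] scale[of "\<lambda>z. A N (wave_foot c z)" "- 1"] wave
      unfolding Sigma_space_def by simp
    also have "\<dots> = T v"
    proof -
      have "T (A N) = T v"
        unfolding A_def by (rule wave_invariant_functional_orbit_mean[OF \<open>c \<noteq> 0\<close> add scale invariant v \<open>N > 0\<close>])
      then show ?thesis using vanishes[OF wave] by simp
    qed
    finally show "\<bar>T v\<bar> \<le> K * C1_norm (\<lambda>z. A N z - A N (wave_foot c z))"
      using bound[OF defect_W] by simp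
  qed
  have lim: "(\<lambda>N. K * C1_norm (\<lambda>z. A N z - A N (wave_foot c z))) \<longlonglongrightarrow> K * 0"
    unfolding A_def by (intro tendsto_mult tendsto_const orbit_mean_wave_defect_tendsto_0 v assms(1,2))
  from tendsto_lowerbound[OF lim ev trivial_limit_sequentially] show ?thesis by simp
qed

lemma has_real_derivative_of_frechet_approx:
  fixes S :: "('a \<Rightarrow> 'b::real_vector) \<Rightarrow> real" and nrm :: "('a \<Rightarrow> 'b) \<Rightarrow> real"
  assumes approx: "\<forall>e>0. \<exists>\<delta>>0. \<forall>h\<in>V. nrm h < \<delta> \<longrightarrow> \<bar>S (\<lambda>z. u z + h z) - S u - T h\<bar> \<le> e * nrm h"
    and hom: "\<And>r. T (\<lambda>z. r *\<^sub>R v z) = r * T v"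
    and V: "\<And>r. (\<lambda>z. r *\<^sub>R v z) \<in> V"
    and nrm: "\<And>r. nrm (\<lambda>z. r *\<^sub>R v z) \<le> \<bar>r\<bar> * M"
  shows "((\<lambda>\<epsilon>. S (\<lambda>z. u z + \<epsilon> *\<^sub>R v z)) has_real_derivative T v) (at 0)"
  unfolding has_field_derivative_def has_derivative_at_alt
proof (intro conjI allI impI)
  show "bounded_linear ((*) (T v))" by (rule bounded_linear_mult_right)
  fix e :: real assume "e > 0"
  define M' where "M' = max M 0 + 1"
  have M': "M' > 0" "M \<le> M'" by (simp_all add: M'_def)
  obtain \<delta> where "\<delta> > 0"
    and \<delta>: "\<And>h. h \<in> V \<Longrightarrow> nrm h < \<delta> \<Longrightarrow> \<bar>S (\<lambda>z. u z + h z) - S u - T h\<bar> \<le> e / M' * nrm h"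
    using approx \<open>e > 0\<close> M' by (metis divide_pos_pos)
  show "\<exists>d>0. \<forall>y. norm (y - 0) < d \<longrightarrow>
      norm (S (\<lambda>z. u z + y *\<^sub>R v z) - S (\<lambda>z. u z + 0 *\<^sub>R v z) - T v * (y - 0)) \<le> e * norm (y - 0)"
  proof (intro exI[of _ "\<delta> / M'"] conjI allI impI)
    show "\<delta> / M' > 0" using \<open>\<delta> > 0\<close> M' by simp
    fix y :: real assume "norm (y - 0) < \<delta> / M'"
    then have "\<bar>y\<bar> * M' < \<delta>" using M' by (simp add: field_simps)
    have nrm_y: "nrm (\<lambda>z. y *\<^sub>R v z) \<le> \<bar>y\<bar> * M'"
      using nrm[of y] mult_left_mono[OF M'(2) abs_ge_zero[of y]] by linarith
    have "\<bar>S (\<lambda>z. u z + y *\<^sub>R v z) - S u - y * T v\<bar> \<le> e / M' * nrm (\<lambda>z. y *\<^sub>R v z)"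
      using \<delta>[OF V] nrm_y \<open>\<bar>y\<bar> * M' < \<delta>\<close> hom by simp
    also have "\<dots> \<le> e / M' * (\<bar>y\<bar> * M')"
      using nrm_y \<open>e > 0\<close> M' by (intro mult_left_mono) simp_all
    also have "\<dots> = e * \<bar>y\<bar>" using M' by simp
    finally show "norm (S (\<lambda>z. u z + y *\<^sub>R v z) - S (\<lambda>z. u z + 0 *\<^sub>R v z) - T v * (y - 0))
        \<le> e * norm (y - 0)"
      by (simp add: mult.commute)
  qed
qed

lemma C1_functional_on_W_space_derivative:
  assumes S: "C1_functional_on (W_space b c) S" and u: "u \<in> W_space b c" and "b > 0" "c \<noteq> 0"
  obtains T K where
    "\<And>f g. f \<in> W_space b c \<Longrightarrow> g \<in> W_space b c \<Longrightarrow> T (\<lambda>z. f z + g z) = T f + T g"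
    "\<And>f r. f \<in> W_space b c \<Longrightarrow> T (\<lambda>z. r *\<^sub>R f z) = r * T f"
    "\<And>f. f \<in> W_space b c \<Longrightarrow> \<bar>T f\<bar> \<le> K * C1_norm f"
    "\<And>v. v \<in> W_space b c \<Longrightarrow> ((\<lambda>\<epsilon>. S (\<lambda>z. u z + \<epsilon> *\<^sub>R v z)) has_real_derivative T v) (at 0)"
proof -
  obtain DS where DS: "\<forall>u\<in>W_space b c.
      (\<forall>h\<in>W_space b c. \<forall>k\<in>W_space b c. DS u (\<lambda>z. h z + k z) = DS u h + DS u k) \<and>
      (\<forall>h\<in>W_space b c. \<forall>r. DS u (\<lambda>z. r *\<^sub>R h z) = r * DS u h) \<and>
      (\<exists>K. \<forall>h\<in>W_space b c. \<bar>DS u h\<bar> \<le> K * C1_norm h)"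
    and approx: "\<forall>u\<in>W_space b c. \<forall>e>0. \<exists>\<delta>>0. \<forall>h\<in>W_space b c. C1_norm h < \<delta> \<longrightarrow>
      \<bar>S (\<lambda>z. u z + h z) - S u - DS u h\<bar> \<le> e * C1_norm h"
    using S unfolding C1_functional_on_def by blast
  obtain K where K: "\<And>h. h \<in> W_space b c \<Longrightarrow> \<bar>DS u h\<bar> \<le> K * C1_norm h"
    using DS u by blast
  have "((\<lambda>\<epsilon>. S (\<lambda>z. u z + \<epsilon> *\<^sub>R v z)) has_real_derivative DS u v) (at 0)" if v: "v \<in> W_space b c" for v
    by (rule has_real_derivative_of_frechet_approx[where V = "W_space b c" and nrm = C1_norm])
      (use approx u DS v W_space_scaleR C1_norm_scaleR_le[OF v \<open>b > 0\<close> \<open>c \<noteq> 0\<close>] in auto)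
  with DS u K show ?thesis using that by blast
qed

lemma discrete_action_derivative_wave_invariant:
  assumes u: "u \<in> Sigma_space b c" and "b > 0" "c \<noteq> 0" and v: "v \<in> W_space b c"
    and deriv: "\<And>v. v \<in> W_space b c \<Longrightarrow>
      ((\<lambda>\<epsilon>. discrete_action b c dt dx L (\<lambda>z. u z + \<epsilon> *\<^sub>R v z)) has_real_derivative T v) (at 0)"
  shows "T (\<lambda>z. v (z + (s, c * s))) = T v"
proof -
  have uW: "u \<in> W_space b c" using u unfolding Sigma_space_def by blast
  have u_inv: "u (z + (s, c * s)) = u z" for z
    using u unfolding Sigma_space_def by (cases z) auto
  have "discrete_action b c dt dx L (\<lambda>z. u z + \<epsilon> *\<^sub>R v (z + (s, c * s)))
      = discrete_action b c dt dx L (\<lambda>z. u z + \<epsilon> *\<^sub>R v z)" for \<epsilon>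
    using discrete_action_translate[of b c "\<lambda>z. u z + \<epsilon> *\<^sub>R v z" dt dx L "(s, c * s)", OF _ assms(2,3)]
      W_space_add[OF uW W_space_scaleR[OF v]] u_inv unfolding W_space_def by simp
  then have "((\<lambda>\<epsilon>. discrete_action b c dt dx L (\<lambda>z. u z + \<epsilon> *\<^sub>R v (z + (s, c * s))))
      has_real_derivative T v) (at 0)"
    using deriv[OF v] by simp
  then show ?thesis
    using deriv[OF W_space_translate[OF v]] DERIV_unique by blast
qed

theorem proposition4:
  fixes c b dt dx :: real
    and L :: "real ^ 'd \<Rightarrow> real ^ 'd \<Rightarrow> real ^ 'd \<Rightarrow> real"
    and u :: "real \<times> real \<Rightarrow> real ^ 'd"
  assumes "c \<noteq> 0" and "b > 0" and "dt > 0" and "dx > 0"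
    and "C1_functional_on (W_space b c) (discrete_action b c dt dx L)"
    and "u \<in> Sigma_space b c"
  shows "stationary_wrt (W_space b c) (discrete_action b c dt dx L) u \<longleftrightarrow>
         stationary_wrt (Sigma_space b c) (discrete_action b c dt dx L) u"
proof
  assume "stationary_wrt (W_space b c) (discrete_action b c dt dx L) u"
  then show "stationary_wrt (Sigma_space b c) (discrete_action b c dt dx L) u"
    unfolding stationary_wrt_def Sigma_space_def by blast
next
  assume stationary: "stationary_wrt (Sigma_space b c) (discrete_action b c dt dx L) u"
  have "u \<in> W_space b c" using assms(6) unfolding Sigma_space_def by blast
  then obtain T K where add: "\<And>f g. f \<in> W_space b c \<Longrightarrow> g \<in> W_space b c \<Longrightarrow> T (\<lambda>z. f z + g z) = T f + T g"
    and scale: "\<And>f r. f \<in> W_space b c \<Longrightarrow> T (\<lambda>z. r *\<^sub>R f z) = r * T f"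
    and bound: "\<And>f. f \<in> W_space b c \<Longrightarrow> \<bar>T f\<bar> \<le> K * C1_norm f"
    and deriv: "\<And>v. v \<in> W_space b c \<Longrightarrow>
      ((\<lambda>\<epsilon>. discrete_action b c dt dx L (\<lambda>z. u z + \<epsilon> *\<^sub>R v z)) has_real_derivative T v) (at 0)"
    using C1_functional_on_W_space_derivative[OF assms(5) _ assms(2,1)] by blast
  have "T v = 0" if "v \<in> W_space b c" for v
  proof (rule wave_invariant_functional_vanishes[OF assms(2,1) add scale bound _ _ that])
    show "T (\<lambda>z. f (z + (s, c * s))) = T f" if "f \<in> W_space b c" for f s
      using discrete_action_derivative_wave_invariant[OF assms(6,2,1) that deriv] .
    show "T w = 0" if "w \<in> Sigma_space b c" for w
      using stationary that deriv[of w] DERIV_unique unfolding stationary_wrt_def Sigma_space_def by blast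
  qed
  then show "stationary_wrt (W_space b c) (discrete_action b c dt dx L) u"
    unfolding stationary_wrt_def using deriv by fastforce
qed

end
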